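(* Let $n',n''\ge 0$ be integers, $n=n'+n''$, and consider the system $\dot x=f(x)$ on $\mathbb{R}^n$ with $x=(x';x'')$, $x'\in\mathbb{R}^{n'}$, $x''\in\mathbb{R}^{n''}$, of the form $$\dot x'(t)=A'x'(t)+D,\qquad \dot x''(t)=A''x''(t)+g(x'(t)),$$ where $A'\in\mathbb{R}^{n'\times n'}$ and $A''\in\mathbb{R}^{n''\times n''}$ are constant matrices, $D\in\mathbb{R}^{n'}$ is a constant vector, and $g:\mathbb{R}^{n'}\to\mathbb{R}^{n''}$ is a polynomial map. Then this system (i.e., the vector field $f(x)=(A'x'+D;\,A''x''+g(x'))$) is super-linearizable.
   Context: Super-linearization: let $\Pi:\mathbb{R}^{n+m}\to\mathbb{R}^n$ be the projection $\Pi(z)=(z_1,\ldots,z_n)$. A vector field $f:\mathbb{R}^n\to\mathbb{R}^n$ is super-linearizable if there exist an integer $m\ge 0$, a matrix $A\in\mathbb{R}^{(n+m)\times(n+m)}$, a vector $D\in\mathbb{R}^{n+m}$ and an injective map $p:\mathbb{R}^n\to\mathbb{R}^m$ (the observables) such that for all $x_0\in\mathbb{R}^n$ and all $t$, $\Pi\big(e^{t(Az+D)}z_0\big)=e^{tf}x_0$ where $z_0=(x_0,p(x_0))$. Here $e^{tg}y_0$ denotes the solution at time $t$ of $\dot y=g(y)$ with initial state $y_0$. *)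

theory Defs
  imports "HOL-Analysis.Analysis"
begin

text \<open>Vectors of R^k are represented as functions nat => real vanishing at indices >= k.
  Matrices are functions nat => nat => real (only entries below the size matter).\<close>

definition vec :: "nat \<Rightarrow> (nat \<Rightarrow> real) set" where
  "vec k = {x. \<forall>i\<ge>k. x i = 0}"

text \<open>y is a global solution (defined for all real t) of y' = F(y) in R^k
  (differentiability componentwise, equivalent to vector differentiability in finite dimension).\<close>
definition solves :: "nat \<Rightarrow> ((nat \<Rightarrow> real) \<Rightarrow> (nat \<Rightarrow> real)) \<Rightarrow> (real \<Rightarrow> nat \<Rightarrow> real) \<Rightarrow> bool" where
  "solves k F y \<longleftrightarrow> (\<forall>t. y t \<in> vec k) \<and>
     (\<forall>t. \<forall>i<k. ((\<lambda>s. y s i) has_real_derivative F (y t) i) (at t))"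

definition flow :: "nat \<Rightarrow> ((nat \<Rightarrow> real) \<Rightarrow> (nat \<Rightarrow> real)) \<Rightarrow> (nat \<Rightarrow> real) \<Rightarrow> real \<Rightarrow> (nat \<Rightarrow> real)" where
  "flow k F y0 t = (THE y. solves k F y \<and> y 0 = y0) t"

definition aff :: "nat \<Rightarrow> (nat \<Rightarrow> nat \<Rightarrow> real) \<Rightarrow> (nat \<Rightarrow> real) \<Rightarrow> (nat \<Rightarrow> real) \<Rightarrow> (nat \<Rightarrow> real)" where
  "aff k A D z = (\<lambda>i. if i < k then (\<Sum>j<k. A i j * z j) + D i else 0)"

definition proj :: "nat \<Rightarrow> (nat \<Rightarrow> real) \<Rightarrow> (nat \<Rightarrow> real)" where
  "proj n z = (\<lambda>i. if i < n then z i else 0)"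

definition concat :: "nat \<Rightarrow> (nat \<Rightarrow> real) \<Rightarrow> (nat \<Rightarrow> real) \<Rightarrow> (nat \<Rightarrow> real)" where
  "concat n x w = (\<lambda>i. if i < n then x i else w (i - n))"

definition super_linearizable :: "nat \<Rightarrow> ((nat \<Rightarrow> real) \<Rightarrow> (nat \<Rightarrow> real)) \<Rightarrow> bool" where
  "super_linearizable n f \<longleftrightarrow>
     (\<exists>(m::nat) (A::nat \<Rightarrow> nat \<Rightarrow> real) (D::nat \<Rightarrow> real) (p::(nat \<Rightarrow> real) \<Rightarrow> (nat \<Rightarrow> real)).
        (\<forall>x\<in>vec n. p x \<in> vec m) \<and> inj_on p (vec n) \<and>
        (\<forall>x0\<in>vec n. \<forall>t::real.
           proj n (flow (n + m) (aff (n + m) A D) (concat n x0 (p x0)) t) = flow n f x0 t))"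

inductive_set poly_fun :: "nat \<Rightarrow> ((nat \<Rightarrow> real) \<Rightarrow> real) set" for k :: nat where
  pf_const: "(\<lambda>x. c) \<in> poly_fun k"
| pf_var: "i < k \<Longrightarrow> (\<lambda>x. x i) \<in> poly_fun k"
| pf_add: "p \<in> poly_fun k \<Longrightarrow> q \<in> poly_fun k \<Longrightarrow> (\<lambda>x. p x + q x) \<in> poly_fun k"
| pf_mult: "p \<in> poly_fun k \<Longrightarrow> q \<in> poly_fun k \<Longrightarrow> (\<lambda>x. p x * q x) \<in> poly_fun k"

definition tri_field :: "nat \<Rightarrow> nat \<Rightarrow> (nat \<Rightarrow> nat \<Rightarrow> real) \<Rightarrow> (nat \<Rightarrow> real) \<Rightarrow> (nat \<Rightarrow> nat \<Rightarrow> real)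
    \<Rightarrow> ((nat \<Rightarrow> real) \<Rightarrow> (nat \<Rightarrow> real)) \<Rightarrow> (nat \<Rightarrow> real) \<Rightarrow> (nat \<Rightarrow> real)" where
  "tri_field n1 n2 A1 D A2 g x = (\<lambda>i.
     if i < n1 then (\<Sum>j<n1. A1 i j * x j) + D i
     else if i < n1 + n2 then (\<Sum>j<n2. A2 (i - n1) j * x (n1 + j)) + g (proj n1 x) (i - n1)
     else 0)"

end

(*
  Along every solution, x' obeys the autonomous affine equation dx'/dt = A' x' + D. The constant 1,
  the coordinates of x' and all their finite products span a family of functions closed under
  differentiation along that equation with constant coefficients, and every component of the
  polynomial g is a linear combination of finitely many of them. Taking such a finite family
  Psi(x') as extra coordinates, (x, Psi(x')) solves an affine system with constant coefficients;
  a constant copy of x makes the observable map injective. Uniqueness of solutions of linear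
  systems (a Gronwall estimate for |w|^2) then identifies the projection of the affine flow with
  the flow of the original field.
*)
theory Submission
  imports Defs
begin

section \<open>Linear systems\<close>

lemma abs_quadratic_form_le:
  fixes w :: "'i \<Rightarrow> real"
  assumes "finite I"
  shows "\<bar>\<Sum>i\<in>I. w i * (\<Sum>j\<in>I. B i j * w j)\<bar> \<le> (\<Sum>i\<in>I. \<Sum>j\<in>I. \<bar>B i j\<bar>) * (\<Sum>i\<in>I. (w i)\<^sup>2)"
proof -
  let ?E = "\<Sum>i\<in>I. (w i)\<^sup>2"
  have sq_le: "(w i)\<^sup>2 \<le> ?E" if "i \<in> I" for i
    using assms that by (intro member_le_sum) auto
  have prod_le: "\<bar>w i * w j\<bar> \<le> ?E" if "i \<in> I" "j \<in> I" for i j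
  proof -
    have "\<bar>w i * w j\<bar> \<le> ((w i)\<^sup>2 + (w j)\<^sup>2) / 2"
      using sum_squares_bound[of "\<bar>w i\<bar>" "\<bar>w j\<bar>"] abs_mult_self_eq
      by (simp add: abs_mult power2_eq_square)
    also have "\<dots> \<le> ?E" using sq_le[OF that(1)] sq_le[OF that(2)] by simp
    finally show ?thesis .
  qed
  have "\<bar>\<Sum>i\<in>I. w i * (\<Sum>j\<in>I. B i j * w j)\<bar> \<le> (\<Sum>i\<in>I. \<Sum>j\<in>I. \<bar>B i j\<bar> * \<bar>w i * w j\<bar>)"
    unfolding sum_distrib_left
    by (rule order.trans[OF sum_abs], rule sum_mono, rule order.trans[OF sum_abs])
       (simp add: abs_mult algebra_simps)
  also have "\<dots> \<le> (\<Sum>i\<in>I. \<Sum>j\<in>I. \<bar>B i j\<bar> * ?E)"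
    using prod_le by (intro sum_mono mult_left_mono) auto
  finally show ?thesis by (simp add: sum_distrib_right)
qed

lemma gronwall_zero_forward:
  fixes E E' :: "real \<Rightarrow> real"
  assumes deriv: "\<And>s. (E has_real_derivative E' s) (at s)"
    and le: "\<And>s. E' s \<le> c * E s" and nonneg: "\<And>s. 0 \<le> E s" and "E 0 = 0" and "0 \<le> t"
  shows "E t = 0"
proof -
  define F where "F s = E s * exp (- c * s)" for s
  have "F t \<le> F 0"
  proof (rule DERIV_nonpos_imp_nonincreasing[OF \<open>0 \<le> t\<close>])
    fix s
    have "(F has_real_derivative (E' s - c * E s) * exp (- c * s)) (at s)"
      unfolding F_def by (rule derivative_eq_intros deriv refl | simp add: algebra_simps)+
    moreover have "(E' s - c * E s) * exp (- c * s) \<le> 0"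
      using le[of s] by (simp add: mult_nonpos_nonneg)
    ultimately show "\<exists>y. (F has_real_derivative y) (at s) \<and> y \<le> 0" by blast
  qed
  then show ?thesis
    using \<open>E 0 = 0\<close> nonneg[of t] by (simp add: F_def mult_le_0_iff)
qed

lemma gronwall_zero:
  fixes E E' :: "real \<Rightarrow> real"
  assumes deriv: "\<And>s. (E has_real_derivative E' s) (at s)"
    and le: "\<And>s. \<bar>E' s\<bar> \<le> c * E s" and nonneg: "\<And>s. 0 \<le> E s" and "E 0 = 0"
  shows "E t = 0"
proof (cases "0 \<le> t")
  case True
  show ?thesis
    by (rule gronwall_zero_forward[OF deriv _ nonneg \<open>E 0 = 0\<close> True])
       (use le abs_le_D1 in blast)
next
  case False
  have "E (- (- t)) = 0"
  proof (rule gronwall_zero_forward[where E = "\<lambda>s. E (- s)" and E' = "\<lambda>s. - E' (- s)"])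
    show "((\<lambda>s. E (- s)) has_real_derivative - E' (- s)) (at s)" for s
      using DERIV_chain2[OF deriv DERIV_minus[OF DERIV_ident]] by simp
    show "- E' (- s) \<le> c * E (- s)" for s
      using le[of "- s"] by linarith
  qed (use nonneg \<open>E 0 = 0\<close> False in auto)
  then show ?thesis by simp
qed

lemma linear_ode_zero:
  fixes w :: "real \<Rightarrow> 'i \<Rightarrow> real"
  assumes "finite I"
    and deriv: "\<And>k t. k \<in> I \<Longrightarrow> ((\<lambda>s. w s k) has_real_derivative (\<Sum>l\<in>I. B k l * w t l)) (at t)"
    and init: "\<And>k. k \<in> I \<Longrightarrow> w 0 k = 0"
    and "k \<in> I"
  shows "w t k = 0"
proof -
  define E where "E s = (\<Sum>k\<in>I. (w s k)\<^sup>2)" for s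
  define E' where "E' s = (\<Sum>k\<in>I. 2 * (w s k * (\<Sum>l\<in>I. B k l * w s l)))" for s
  have "(E has_real_derivative E' s) (at s)" for s
    unfolding E_def E'_def
    by (rule DERIV_sum, rule DERIV_power[OF deriv, THEN DERIV_cong]) (simp_all add: algebra_simps)
  moreover have "\<bar>E' s\<bar> \<le> (2 * (\<Sum>k\<in>I. \<Sum>l\<in>I. \<bar>B k l\<bar>)) * E s" for s
    using abs_quadratic_form_le[OF \<open>finite I\<close>, of "w s" B]
    by (simp add: E_def E'_def abs_mult flip: sum_distrib_left)
  moreover have "0 \<le> E s" for s unfolding E_def by (simp add: sum_nonneg)
  moreover have "E 0 = 0" unfolding E_def by (simp add: init)
  ultimately have "E t = 0" by (rule gronwall_zero)
  then show ?thesis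
    using \<open>finite I\<close> \<open>k \<in> I\<close> by (simp add: E_def sum_nonneg_eq_0_iff)
qed

lemma linear_ode_unique:
  fixes u v :: "real \<Rightarrow> 'i \<Rightarrow> real"
  assumes "finite I"
    and "\<And>k t. k \<in> I \<Longrightarrow> ((\<lambda>s. u s k) has_real_derivative (\<Sum>l\<in>I. B k l * u t l) + b t k) (at t)"
    and "\<And>k t. k \<in> I \<Longrightarrow> ((\<lambda>s. v s k) has_real_derivative (\<Sum>l\<in>I. B k l * v t l) + b t k) (at t)"
    and "\<And>k. k \<in> I \<Longrightarrow> u 0 k = v 0 k"
    and "k \<in> I"
  shows "u t k = v t k"
proof -
  have "(\<lambda>s k. u s k - v s k) t k = 0"
  proof (rule linear_ode_zero[OF \<open>finite I\<close> _ _ \<open>k \<in> I\<close>, where B = B and w = "\<lambda>s k. u s k - v s k"])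
    fix k t assume "k \<in> I"
    from DERIV_diff[OF assms(2,3)[OF this]]
    show "((\<lambda>s. u s k - v s k) has_real_derivative (\<Sum>l\<in>I. B k l * (u t l - v t l))) (at t)"
      by (simp add: right_diff_distrib sum_subtractf)
  qed (simp add: assms(4))
  then show ?thesis by simp
qed

lemma aff_apply:
  "aff K A D z i = (if i < K then (\<Sum>j<K. A i j * z j) + D i else 0)"
  by (simp add: aff_def)

lemma aff_in_vec: "aff K A D z \<in> vec K"
  by (simp add: vec_def aff_apply)

lemma aff_power_bound:
  assumes "z \<in> vec K"
  shows "\<bar>(aff K A (\<lambda>_. 0) ^^ j) z i\<bar> \<le> (\<Sum>l<K. \<bar>z l\<bar>) * (\<Sum>k<K. \<Sum>l<K. \<bar>A k l\<bar>) ^ j"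
proof (induction j arbitrary: i)
  case 0
  show ?case
    using assms by (cases "i < K") (auto intro: member_le_sum simp: vec_def sum_nonneg)
next
  case (Suc j)
  let ?M = "\<Sum>l<K. \<bar>z l\<bar>" and ?a = "\<Sum>k<K. \<Sum>l<K. \<bar>A k l\<bar>"
  show ?case
  proof (cases "i < K")
    case True
    have "\<bar>(aff K A (\<lambda>_. 0) ^^ Suc j) z i\<bar> = \<bar>\<Sum>l<K. A i l * (aff K A (\<lambda>_. 0) ^^ j) z l\<bar>"
      using True by (simp add: aff_apply)
    also have "\<dots> \<le> (\<Sum>l<K. \<bar>A i l\<bar> * (?M * ?a ^ j))"
      by (rule order.trans[OF sum_abs], rule sum_mono) (simp add: abs_mult mult_left_mono Suc.IH)
    also have "\<dots> \<le> ?a * (?M * ?a ^ j)"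
      using True by (auto simp: sum_distrib_right[symmetric] sum_nonneg
          intro!: mult_right_mono member_le_sum[where i = i and f = "\<lambda>k. \<Sum>l<K. \<bar>A k l\<bar>"])
    finally show ?thesis by (simp add: algebra_simps)
  next
    case False
    then show ?thesis by (simp add: aff_apply sum_nonneg)
  qed
qed

lemma aff_power_series_summable:
  assumes "z \<in> vec K"
  shows "summable (\<lambda>j. (aff K A (\<lambda>_. 0) ^^ j) z i / fact j * x ^ j)"
proof (rule summable_comparison_test')
  let ?M = "\<Sum>l<K. \<bar>z l\<bar>" and ?a = "\<Sum>k<K. \<Sum>l<K. \<bar>A k l\<bar>"
  show "summable (\<lambda>j. ?M * (inverse (fact j) * (?a * \<bar>x\<bar>) ^ j))"
    by (intro summable_mult summable_exp)
  show "norm ((aff K A (\<lambda>_. 0) ^^ j) z i / fact j * x ^ j)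
      \<le> ?M * (inverse (fact j) * (?a * \<bar>x\<bar>) ^ j)" for j
    using mult_right_mono[OF aff_power_bound[OF assms, where A = A and j = j and i = i],
        of "\<bar>x\<bar> ^ j / fact j"]
    by (simp add: abs_mult power_abs power_mult_distrib field_simps)
qed

lemma linear_solution_exists:
  assumes "z0 \<in> vec K"
  shows "\<exists>y. solves K (aff K A (\<lambda>_. 0)) y \<and> y 0 = z0"
proof -
  let ?P = "\<lambda>j. (aff K A (\<lambda>_. 0) ^^ j) z0"
  define c where "c i j = ?P j i / fact j" for i j
  define y where "y t i = (\<Sum>j. c i j * t ^ j)" for t i
  have summable: "summable (\<lambda>j. c i j * x ^ j)" for i x
    unfolding c_def by (rule aff_power_series_summable[OF assms])
  have "y 0 = z0"
    by (rule ext) (simp add: y_def powser_zero, simp add: c_def)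
  moreover have "y t \<in> vec K" for t
  proof -
    have "?P j \<in> vec K" for j
      by (induction j) (simp_all add: assms aff_in_vec)
    then show ?thesis by (simp add: vec_def y_def c_def)
  qed
  moreover have "((\<lambda>s. y s i) has_real_derivative aff K A (\<lambda>_. 0) (y t) i) (at t)"
    if "i < K" for t i
  proof -
    have diffs_c: "diffs (c i) j = (\<Sum>l<K. A i l * c l j)" for j
    proof -
      have "diffs (c i) j = of_nat (Suc j) * (?P (Suc j) i / fact (Suc j))"
        by (simp add: diffs_def c_def)
      also have "\<dots> = ?P (Suc j) i / fact j"
        by (simp add: fact_Suc del: of_nat_Suc)
      finally show ?thesis
        using that by (simp add: c_def aff_apply sum_divide_distrib)
    qed
    have "(\<Sum>j. diffs (c i) j * t ^ j) = (\<Sum>l<K. \<Sum>j. A i l * (c l j * t ^ j))"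
      by (simp add: diffs_c sum_distrib_right mult.assoc suminf_sum summable_mult summable)
    also have "\<dots> = aff K A (\<lambda>_. 0) (y t) i"
      using that by (simp add: aff_apply y_def suminf_mult summable)
    finally have "(\<Sum>j. diffs (c i) j * t ^ j) = aff K A (\<lambda>_. 0) (y t) i" .
    with termdiffs_strong_converges_everywhere[OF summable, of i t] show ?thesis
      by (simp add: y_def)
  qed
  ultimately show ?thesis
    unfolding solves_def by blast
qed

text \<open>Adjoin a coordinate that stays constantly 1, so that \<open>D\<close> becomes a column of a linear system.\<close>
lemma aff_solution_exists:
  assumes "z0 \<in> vec K"
  shows "\<exists>y. solves K (aff K A D) y \<and> y 0 = z0"
proof -
  define A' where "A' i j = (if i < K then if j < K then A i j else D i else 0)" for i j
  have "z0(K := 1) \<in> vec (Suc K)"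
    using assms by (simp add: vec_def)
  then obtain y where y: "solves (Suc K) (aff (Suc K) A' (\<lambda>_. 0)) y" and y0: "y 0 = z0(K := 1)"
    using linear_solution_exists by blast
  have deriv: "((\<lambda>s. y s i) has_real_derivative aff (Suc K) A' (\<lambda>_. 0) (y t) i) (at t)"
    if "i \<le> K" for i t
    using y that by (simp add: solves_def)
  have "y s K = y 0 K" for s
    using deriv[of K] by (intro DERIV_isconst_all) (simp add: aff_apply A'_def)
  then have one: "y s K = 1" for s
    by (simp add: y0)
  have "solves K (aff K A D) (\<lambda>t. (y t)(K := 0))"
    unfolding solves_def
  proof (intro conjI allI impI)
    show "(y t)(K := 0) \<in> vec K" for t
      using y by (simp add: solves_def vec_def)
    fix t i assume "i < K"
    then show "((\<lambda>s. ((y s)(K := 0)) i) has_real_derivative aff K A D ((y t)(K := 0)) i) (at t)"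
      using deriv[of i t] by (simp add: aff_apply A'_def one)
  qed
  moreover have "(y 0)(K := 0) = z0"
    using assms by (auto simp: y0 vec_def)
  ultimately show ?thesis by blast
qed

lemma aff_solution_unique:
  assumes "solves K (aff K A D) y1" "solves K (aff K A D) y2" "y1 0 = y2 0"
  shows "y1 = y2"
proof (intro ext)
  fix t i
  show "y1 t i = y2 t i"
  proof (cases "i < K")
    case True
    show ?thesis
      by (rule linear_ode_unique[where I = "{..<K}" and u = y1 and v = y2 and B = A
            and b = "\<lambda>t. D"])
         (use assms True in \<open>auto simp: solves_def aff_apply\<close>)
  next
    case False
    then show ?thesis using assms by (simp add: solves_def vec_def)
  qed
qed

lemma flow_eqI:
  assumes unique: "\<And>y'. solves k F y' \<Longrightarrow> y' 0 = y 0 \<Longrightarrow> y' = y" and "solves k F y"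
  shows "flow k F (y 0) = y"
proof -
  have "(THE y'. solves k F y' \<and> y' 0 = y 0) = y"
    using assms by (intro the_equality) auto
  then show ?thesis by (simp add: flow_def fun_eq_iff)
qed

lemma super_linearizable_by_lift:
  assumes unique: "\<And>y1 y2. solves n f y1 \<Longrightarrow> solves n f y2 \<Longrightarrow> y1 0 = y2 0 \<Longrightarrow> y1 = y2"
    and p_vec: "\<And>x. x \<in> vec n \<Longrightarrow> p x \<in> vec m" and p_inj: "inj_on p (vec n)"
    and lift: "\<And>x0 z. x0 \<in> vec n \<Longrightarrow> solves (n + m) (aff (n + m) A D) z \<Longrightarrow>
        z 0 = concat n x0 (p x0) \<Longrightarrow> solves n f (\<lambda>t. proj n (z t))"
  shows "super_linearizable n f"
  unfolding super_linearizable_def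
proof (intro exI conjI ballI allI)
  fix x0 t assume x0: "x0 \<in> vec n"
  have "concat n x0 (p x0) \<in> vec (n + m)"
    using x0 p_vec[OF x0] by (simp add: vec_def concat_def)
  then obtain z where z: "solves (n + m) (aff (n + m) A D) z" and z0: "z 0 = concat n x0 (p x0)"
    using aff_solution_exists by blast
  have "flow (n + m) (aff (n + m) A D) (concat n x0 (p x0)) = z"
    using flow_eqI[OF _ z] aff_solution_unique[OF _ z] by (simp add: z0)
  moreover have "proj n (z 0) = x0"
    using x0 by (auto simp: z0 proj_def concat_def vec_def)
  then have "flow n f x0 = (\<lambda>t. proj n (z t))"
    using flow_eqI[OF _ lift[OF x0 z z0]] unique[OF _ lift[OF x0 z z0]] by simp
  ultimately show "proj n (flow (n + m) (aff (n + m) A D) (concat n x0 (p x0)) t) = flow n f x0 t"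
    by simp
qed (use p_vec p_inj in auto)

lemma tri_field_solution_unique:
  assumes y1: "solves (n1 + n2) (tri_field n1 n2 A1 D A2 g) y1"
    and y2: "solves (n1 + n2) (tri_field n1 n2 A1 D A2 g) y2" and "y1 0 = y2 0"
  shows "y1 = y2"
proof -
  have deriv: "((\<lambda>s. y s i) has_real_derivative tri_field n1 n2 A1 D A2 g (y t) i) (at t)"
    if "solves (n1 + n2) (tri_field n1 n2 A1 D A2 g) y" "i < n1 + n2" for y i t
    using that by (simp add: solves_def)
  have deriv_head: "((\<lambda>s. y s i) has_real_derivative (\<Sum>j<n1. A1 i j * y t j) + D i) (at t)"
    if "solves (n1 + n2) (tri_field n1 n2 A1 D A2 g) y" "i < n1" for y i t
    using deriv[OF that(1), of i t] that(2) by (simp add: tri_field_def)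
  have deriv_tail: "((\<lambda>s. y s (n1 + k)) has_real_derivative
      (\<Sum>j<n2. A2 k j * y t (n1 + j)) + g (proj n1 (y t)) k) (at t)"
    if "solves (n1 + n2) (tri_field n1 n2 A1 D A2 g) y" "k < n2" for y k t
    using deriv[OF that(1), of "n1 + k" t] that(2) by (simp add: tri_field_def)
  have head: "y1 t i = y2 t i" if "i < n1" for t i
    by (rule linear_ode_unique[where I = "{..<n1}" and u = y1 and v = y2 and B = A1
          and b = "\<lambda>t. D"])
       (use deriv_head[OF y1] deriv_head[OF y2] \<open>y1 0 = y2 0\<close> that in auto)
  then have proj_eq: "proj n1 (y1 t) = proj n1 (y2 t)" for t
    by (simp add: proj_def fun_eq_iff)
  have tail: "y1 t (n1 + k) = y2 t (n1 + k)" if "k < n2" for t k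
  proof (rule linear_ode_unique[where I = "{..<n2}" and u = "\<lambda>s k. y1 s (n1 + k)"
        and v = "\<lambda>s k. y2 s (n1 + k)" and B = "A2" and b = "\<lambda>t k. g (proj n1 (y1 t)) k"])
    show "((\<lambda>s. y2 s (n1 + k)) has_real_derivative
        (\<Sum>l\<in>{..<n2}. A2 k l * y2 t (n1 + l)) + g (proj n1 (y1 t)) k) (at t)"
      if "k \<in> {..<n2}" for k t
      using deriv_tail[OF y2, of k t] that by (simp add: proj_eq)
  qed (use deriv_tail[OF y1] \<open>y1 0 = y2 0\<close> that in simp_all)
  show ?thesis
  proof (intro ext)
    fix t i
    consider "i < n1" | k where "k < n2" "i = n1 + k" | "n1 + n2 \<le> i"
      by (metis add_diff_inverse_nat nat_add_left_cancel_less not_less)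
    then show "y1 t i = y2 t i"
    proof cases
      case 3
      then show ?thesis using y1 y2 by (simp add: solves_def vec_def)
    qed (simp_all add: head tail)
  qed
qed

section \<open>Function families closed under differentiation\<close>

definition lincomb_of :: "('x \<Rightarrow> real) set \<Rightarrow> ('x \<Rightarrow> real) \<Rightarrow> bool" where
  "lincomb_of \<F> \<phi> \<longleftrightarrow> (\<exists>c. \<forall>x. \<phi> x = (\<Sum>\<psi>\<in>\<F>. c \<psi> * \<psi> x))"

lemma lincomb_of_zero: "lincomb_of \<F> (\<lambda>x. 0)"
  unfolding lincomb_of_def by (rule exI[of _ "\<lambda>_. 0"]) simp

lemma lincomb_of_mem: "finite \<F> \<Longrightarrow> \<phi> \<in> \<F> \<Longrightarrow> lincomb_of \<F> \<phi>"
  unfolding lincomb_of_def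
  by (rule exI[of _ "\<lambda>\<psi>. if \<psi> = \<phi> then 1 else 0"])
     (simp add: if_distrib if_distribR sum.delta' cong: if_cong)

lemma lincomb_of_add:
  assumes "lincomb_of \<F> \<phi>" "lincomb_of \<F> \<psi>"
  shows "lincomb_of \<F> (\<lambda>x. \<phi> x + \<psi> x)"
proof -
  obtain c d where "\<And>x. \<phi> x = (\<Sum>\<theta>\<in>\<F>. c \<theta> * \<theta> x)" "\<And>x. \<psi> x = (\<Sum>\<theta>\<in>\<F>. d \<theta> * \<theta> x)"
    using assms unfolding lincomb_of_def by metis
  then show ?thesis
    unfolding lincomb_of_def
    by (intro exI[of _ "\<lambda>\<theta>. c \<theta> + d \<theta>"]) (simp add: distrib_right sum.distrib)
qed

lemma lincomb_of_scale:
  assumes "lincomb_of \<F> \<phi>"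
  shows "lincomb_of \<F> (\<lambda>x. a * \<phi> x)"
proof -
  obtain c where "\<And>x. \<phi> x = (\<Sum>\<theta>\<in>\<F>. c \<theta> * \<theta> x)"
    using assms unfolding lincomb_of_def by metis
  then show ?thesis
    unfolding lincomb_of_def
    by (intro exI[of _ "\<lambda>\<theta>. a * c \<theta>"]) (simp add: sum_distrib_left mult.assoc)
qed

lemma lincomb_of_sum:
  assumes "\<And>i. i \<in> I \<Longrightarrow> lincomb_of \<F> (h i)"
  shows "lincomb_of \<F> (\<lambda>x. \<Sum>i\<in>I. h i x)"
proof (cases "finite I")
  case True
  then show ?thesis
    using assms by (induction I rule: finite_induct) (simp_all add: lincomb_of_zero lincomb_of_add)
qed (simp add: lincomb_of_zero)

lemma lincomb_of_mono:
  assumes "finite \<G>" "\<F> \<subseteq> \<G>" "lincomb_of \<F> \<phi>"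
  shows "lincomb_of \<G> \<phi>"
proof -
  obtain c where "\<phi> = (\<lambda>x. \<Sum>\<theta>\<in>\<F>. c \<theta> * \<theta> x)"
    using assms(3) unfolding lincomb_of_def by fast
  moreover have "lincomb_of \<G> (\<lambda>x. \<Sum>\<theta>\<in>\<F>. c \<theta> * \<theta> x)"
    using assms(1,2) by (intro lincomb_of_sum lincomb_of_scale lincomb_of_mem) auto
  ultimately show ?thesis by simp
qed

definition fun_products :: "('x \<Rightarrow> real) set \<Rightarrow> ('x \<Rightarrow> real) set \<Rightarrow> ('x \<Rightarrow> real) set" where
  "fun_products \<F> \<G> = (\<lambda>(\<phi>, \<psi>) x. \<phi> x * \<psi> x) ` (\<F> \<times> \<G>)"

lemma finite_fun_products: "finite \<F> \<Longrightarrow> finite \<G> \<Longrightarrow> finite (fun_products \<F> \<G>)"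
  by (simp add: fun_products_def)

lemma lincomb_of_mult:
  assumes "finite \<F>" "finite \<G>" "lincomb_of \<F> \<phi>" "lincomb_of \<G> \<psi>"
  shows "lincomb_of (fun_products \<F> \<G>) (\<lambda>x. \<phi> x * \<psi> x)"
proof -
  obtain c d where "\<phi> = (\<lambda>x. \<Sum>\<alpha>\<in>\<F>. c \<alpha> * \<alpha> x)" "\<psi> = (\<lambda>x. \<Sum>\<beta>\<in>\<G>. d \<beta> * \<beta> x)"
    using assms(3,4) unfolding lincomb_of_def by fast
  then have "(\<lambda>x. \<phi> x * \<psi> x) = (\<lambda>x. \<Sum>\<alpha>\<in>\<F>. \<Sum>\<beta>\<in>\<G>. (c \<alpha> * d \<beta>) * (\<lambda>x. \<alpha> x * \<beta> x) x)"
    by (simp add: sum_product algebra_simps)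
  moreover have "lincomb_of (fun_products \<F> \<G>) (\<lambda>x. \<Sum>\<alpha>\<in>\<F>. \<Sum>\<beta>\<in>\<G>. (c \<alpha> * d \<beta>) * (\<lambda>x. \<alpha> x * \<beta> x) x)"
    using assms(1,2)
    by (intro lincomb_of_sum lincomb_of_scale lincomb_of_mem finite_fun_products)
       (auto simp: fun_products_def)
  ultimately show ?thesis by simp
qed

definition closed_along :: "((real \<Rightarrow> 'x) \<Rightarrow> bool) \<Rightarrow> ('x \<Rightarrow> real) set \<Rightarrow> bool" where
  "closed_along T \<F> \<longleftrightarrow> finite \<F> \<and> (\<forall>\<phi>\<in>\<F>. \<exists>\<phi>'. lincomb_of \<F> \<phi>' \<and>
     (\<forall>u t. T u \<longrightarrow> ((\<lambda>s. \<phi> (u s)) has_real_derivative \<phi>' (u t)) (at t)))"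

lemma closed_alongI:
  assumes "finite \<F>"
    and "\<And>\<phi>. \<phi> \<in> \<F> \<Longrightarrow> \<exists>\<phi>'. lincomb_of \<F> \<phi>' \<and>
       (\<forall>u t. T u \<longrightarrow> ((\<lambda>s. \<phi> (u s)) has_real_derivative \<phi>' (u t)) (at t))"
  shows "closed_along T \<F>"
  using assms by (simp add: closed_along_def)

lemma closed_along_Union:
  assumes "finite \<S>" "\<And>\<F>. \<F> \<in> \<S> \<Longrightarrow> closed_along T \<F>"
  shows "closed_along T (\<Union>\<S>)"
proof (rule closed_alongI)
  show fin: "finite (\<Union>\<S>)"
    using assms by (auto simp: closed_along_def)
  fix \<phi> assume "\<phi> \<in> \<Union>\<S>"
  then obtain \<F> where "\<F> \<in> \<S>" "\<phi> \<in> \<F>" by blast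
  then obtain \<phi>' where "lincomb_of \<F> \<phi>'"
      "\<forall>u t. T u \<longrightarrow> ((\<lambda>s. \<phi> (u s)) has_real_derivative \<phi>' (u t)) (at t)"
    using assms(2) unfolding closed_along_def by blast
  with fin \<open>\<F> \<in> \<S>\<close> show "\<exists>\<phi>'. lincomb_of (\<Union>\<S>) \<phi>' \<and>
      (\<forall>u t. T u \<longrightarrow> ((\<lambda>s. \<phi> (u s)) has_real_derivative \<phi>' (u t)) (at t))"
    by (meson Union_upper lincomb_of_mono)
qed

lemma closed_along_Un:
  "closed_along T \<F> \<Longrightarrow> closed_along T \<G> \<Longrightarrow> closed_along T (\<F> \<union> \<G>)"
  using closed_along_Union[of "{\<F>, \<G>}" T] by auto

lemma closed_along_products:
  assumes "closed_along T \<F>" "closed_along T \<G>"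
  shows "closed_along T (fun_products \<F> \<G>)"
proof (rule closed_alongI)
  have fin: "finite \<F>" "finite \<G>"
    using assms by (auto simp: closed_along_def)
  then show "finite (fun_products \<F> \<G>)" by (rule finite_fun_products)
  fix \<theta> assume "\<theta> \<in> fun_products \<F> \<G>"
  then obtain \<phi> \<psi> where \<theta>: "\<theta> = (\<lambda>x. \<phi> x * \<psi> x)" and "\<phi> \<in> \<F>" "\<psi> \<in> \<G>"
    by (auto simp: fun_products_def)
  obtain \<phi>' where \<phi>': "lincomb_of \<F> \<phi>'"
      "\<And>u t. T u \<Longrightarrow> ((\<lambda>s. \<phi> (u s)) has_real_derivative \<phi>' (u t)) (at t)"
    using assms(1) \<open>\<phi> \<in> \<F>\<close> unfolding closed_along_def by blast
  obtain \<psi>' where \<psi>': "lincomb_of \<G> \<psi>'"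
      "\<And>u t. T u \<Longrightarrow> ((\<lambda>s. \<psi> (u s)) has_real_derivative \<psi>' (u t)) (at t)"
    using assms(2) \<open>\<psi> \<in> \<G>\<close> unfolding closed_along_def by blast
  have "lincomb_of (fun_products \<F> \<G>) (\<lambda>x. \<phi>' x * \<psi> x + \<phi> x * \<psi>' x)"
    using fin \<phi>'(1) \<psi>'(1) \<open>\<phi> \<in> \<F>\<close> \<open>\<psi> \<in> \<G>\<close>
    by (intro lincomb_of_add lincomb_of_mult) (simp_all add: lincomb_of_mem)
  moreover have "((\<lambda>s. \<theta> (u s)) has_real_derivative \<phi>' (u t) * \<psi> (u t) + \<phi> (u t) * \<psi>' (u t)) (at t)"
    if "T u" for u t
    unfolding \<theta> using DERIV_mult[OF \<phi>'(2) \<psi>'(2), OF that that] by (simp add: mult.commute)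
  ultimately show "\<exists>\<theta>'. lincomb_of (fun_products \<F> \<G>) \<theta>' \<and>
      (\<forall>u t. T u \<longrightarrow> ((\<lambda>s. \<theta> (u s)) has_real_derivative \<theta>' (u t)) (at t))"
    by blast
qed

definition aff_traj :: "nat \<Rightarrow> (nat \<Rightarrow> nat \<Rightarrow> real) \<Rightarrow> (nat \<Rightarrow> real) \<Rightarrow> (real \<Rightarrow> nat \<Rightarrow> real) \<Rightarrow> bool" where
  "aff_traj k A D u \<longleftrightarrow>
     (\<forall>i<k. \<forall>t. ((\<lambda>s. u s i) has_real_derivative (\<Sum>j<k. A i j * u t j) + D i) (at t))"

lemma closed_along_coordinates:
  "closed_along (aff_traj k A D) (insert (\<lambda>x. 1) ((\<lambda>j x. x j) ` {..<k}))"
  (is "closed_along _ ?\<F>")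
proof (rule closed_alongI)
  show fin: "finite ?\<F>" by simp
  fix \<phi> assume "\<phi> \<in> ?\<F>"
  then consider "\<phi> = (\<lambda>x. 1)" | j where "j < k" "\<phi> = (\<lambda>x. x j)" by blast
  then show "\<exists>\<phi>'. lincomb_of ?\<F> \<phi>' \<and>
      (\<forall>u t. aff_traj k A D u \<longrightarrow> ((\<lambda>s. \<phi> (u s)) has_real_derivative \<phi>' (u t)) (at t))"
  proof cases
    case 1
    then show ?thesis using lincomb_of_zero by fastforce
  next
    case (2 j)
    have "lincomb_of ?\<F> (\<lambda>x. (\<Sum>l<k. A j l * x l) + D j * 1)"
      using fin by (intro lincomb_of_add lincomb_of_sum lincomb_of_scale lincomb_of_mem) auto
    then show ?thesis
      using 2 by (intro exI[of _ "\<lambda>x. (\<Sum>l<k. A j l * x l) + D j * 1"]) (simp add: aff_traj_def)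
  qed
qed

lemma poly_fun_closed_along:
  assumes "p \<in> poly_fun k"
  shows "\<exists>\<F>. closed_along (aff_traj k A D) \<F> \<and> lincomb_of \<F> p"
  using assms
proof induction
  case (pf_const c)
  have "closed_along (aff_traj k A D) {\<lambda>x. 1}"
    using lincomb_of_zero by (intro closed_alongI) fastforce+
  moreover have "lincomb_of {\<lambda>x. 1} (\<lambda>x. c * 1)"
    by (intro lincomb_of_scale lincomb_of_mem) auto
  ultimately show ?case by auto
next
  case (pf_var i)
  then show ?case
    by (intro exI[of _ "insert (\<lambda>x. 1) ((\<lambda>j x. x j) ` {..<k})"] conjI
          closed_along_coordinates lincomb_of_mem) auto
next
  case (pf_add p q)
  then obtain \<F> \<G> where "closed_along (aff_traj k A D) \<F>" "lincomb_of \<F> p"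
      "closed_along (aff_traj k A D) \<G>" "lincomb_of \<G> q"
    by blast
  moreover have "finite (\<F> \<union> \<G>)"
    using calculation by (simp add: closed_along_def)
  ultimately show ?case
    by (intro exI[of _ "\<F> \<union> \<G>"] conjI closed_along_Un lincomb_of_add)
       (blast intro: lincomb_of_mono)+
next
  case (pf_mult p q)
  then obtain \<F> \<G> where "closed_along (aff_traj k A D) \<F>" "lincomb_of \<F> p"
      "closed_along (aff_traj k A D) \<G>" "lincomb_of \<G> q"
    by blast
  then show ?case
    by (intro exI[of _ "fun_products \<F> \<G>"] conjI closed_along_products lincomb_of_mult)
       (auto simp: closed_along_def)
qed

lemma poly_map_closed_along:
  fixes N :: nat
  assumes "\<And>i. i < N \<Longrightarrow> (\<lambda>x. g x i) \<in> poly_fun k"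
  shows "\<exists>\<F>. closed_along (aff_traj k A D) \<F> \<and> (\<forall>i<N. lincomb_of \<F> (\<lambda>x. g x i))"
proof -
  have "\<forall>i. \<exists>\<F>. i < N \<longrightarrow> closed_along (aff_traj k A D) \<F> \<and> lincomb_of \<F> (\<lambda>x. g x i)"
    using poly_fun_closed_along[OF assms] by blast
  from choice[OF this] obtain \<F>s
    where \<F>s: "\<And>i. i < N \<Longrightarrow> closed_along (aff_traj k A D) (\<F>s i) \<and> lincomb_of (\<F>s i) (\<lambda>x. g x i)"
    by blast
  then have "closed_along (aff_traj k A D) (\<Union>(\<F>s ` {..<N}))"
    by (intro closed_along_Union) (auto intro: finite_imageI)
  moreover have "lincomb_of (\<Union>(\<F>s ` {..<N})) (\<lambda>x. g x i)" if "i < N" for i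
  proof (rule lincomb_of_mono[where \<F> = "\<F>s i"])
    show "finite (\<Union>(\<F>s ` {..<N}))"
      using calculation by (simp add: closed_along_def)
  qed (use \<F>s that in auto)
  ultimately show ?thesis by blast
qed

lemma closed_along_enumerate:
  fixes N :: nat
  assumes "closed_along T \<F>" "\<And>i. i < N \<Longrightarrow> lincomb_of \<F> (h i)"
  obtains m \<Psi> C E where
    "\<And>u t k. T u \<Longrightarrow> k < (m :: nat) \<Longrightarrow>
      ((\<lambda>s. \<Psi> k (u s)) has_real_derivative (\<Sum>l<m. C k l * \<Psi> l (u t))) (at t)"
    "\<And>i x. i < N \<Longrightarrow> h i x = (\<Sum>k<m. E i k * \<Psi> k x)"
proof -
  have "finite \<F>" using assms(1) by (simp add: closed_along_def)
  then obtain b where b: "bij_betw b {..<card \<F>} \<F>"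
    using ex_bij_betw_nat_finite by (auto simp flip: lessThan_atLeast0)
  have reindex: "(\<Sum>\<psi>\<in>\<F>. f \<psi>) = (\<Sum>l<card \<F>. f (b l))" for f :: "_ \<Rightarrow> real"
    by (rule sum.reindex_bij_betw[OF b, symmetric])
  have "\<forall>\<phi>. \<exists>c. \<phi> \<in> \<F> \<longrightarrow> (\<forall>u t. T u \<longrightarrow>
      ((\<lambda>s. \<phi> (u s)) has_real_derivative (\<Sum>\<psi>\<in>\<F>. c \<psi> * \<psi> (u t))) (at t))"
    using assms(1) unfolding closed_along_def lincomb_of_def by fastforce
  from choice[OF this] obtain c where c: "\<And>\<phi> u t. \<phi> \<in> \<F> \<Longrightarrow> T u \<Longrightarrow>
      ((\<lambda>s. \<phi> (u s)) has_real_derivative (\<Sum>\<psi>\<in>\<F>. c \<phi> \<psi> * \<psi> (u t))) (at t)"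
    by blast
  have "\<forall>i. \<exists>e. i < N \<longrightarrow> (\<forall>x. h i x = (\<Sum>\<psi>\<in>\<F>. e \<psi> * \<psi> x))"
    using assms(2) unfolding lincomb_of_def by blast
  from choice[OF this] obtain e where e: "\<And>i x. i < N \<Longrightarrow> h i x = (\<Sum>\<psi>\<in>\<F>. e i \<psi> * \<psi> x)"
    by blast
  show ?thesis
  proof (rule that[of "card \<F>" b "\<lambda>k l. c (b k) (b l)" "\<lambda>i k. e i (b k)"])
    show "((\<lambda>s. b k (u s)) has_real_derivative (\<Sum>l<card \<F>. c (b k) (b l) * b l (u t))) (at t)"
      if "T u" "k < card \<F>" for u t k
      using c[of "b k", OF _ that(1)] b that(2) by (simp add: reindex bij_betw_apply)
    show "h i x = (\<Sum>k<card \<F>. e i (b k) * b k x)" if "i < N" for i x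
      using e[OF that] by (simp add: reindex)
  qed
qed

section \<open>The lifted affine system\<close>

definition block :: "nat \<Rightarrow> nat \<Rightarrow> nat \<Rightarrow> nat \<Rightarrow> (nat \<Rightarrow> nat \<Rightarrow> real) \<Rightarrow> nat \<Rightarrow> nat \<Rightarrow> real" where
  "block r c h w B i j = (if r \<le> i \<and> i < r + h \<and> c \<le> j \<and> j < c + w then B (i - r) (j - c) else 0)"

lemma sum_block_mult:
  assumes "c + w \<le> K"
  shows "(\<Sum>j<K. block r c h w B i j * z j) =
    (if r \<le> i \<and> i < r + h then \<Sum>j<w. B (i - r) j * z (c + j) else 0)"
proof (cases "r \<le> i \<and> i < r + h")
  case True
  have "(\<Sum>j<K. block r c h w B i j * z j)
      = (\<Sum>j<K. if j \<in> {c..<c + w} then B (i - r) (j - c) * z j else 0)"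
    using True by (intro sum.cong) (simp_all add: block_def)
  also have "\<dots> = (\<Sum>j\<in>{..<K} \<inter> {c..<c + w}. B (i - r) (j - c) * z j)"
    by (simp add: sum.inter_restrict)
  also have "{..<K} \<inter> {c..<c + w} = {0 + c..<w + c}"
    using assms by auto
  also have "(\<Sum>j\<in>{0 + c..<w + c}. B (i - r) (j - c) * z j) = (\<Sum>j<w. B (i - r) j * z (c + j))"
    by (subst sum.shift_bounds_nat_ivl) (simp add: lessThan_atLeast0 add.commute)
  finally show ?thesis
    using True by simp
next
  case False
  then have "block r c h w B i j = 0" for j
    by (auto simp: block_def)
  with False show ?thesis by auto
qed

locale tri_lifting =
  fixes n1 n2 :: nat and A1 A2 :: "nat \<Rightarrow> nat \<Rightarrow> real" and D :: "nat \<Rightarrow> real"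
    and g :: "(nat \<Rightarrow> real) \<Rightarrow> nat \<Rightarrow> real"
    and r :: nat and \<Psi> :: "nat \<Rightarrow> (nat \<Rightarrow> real) \<Rightarrow> real" and C E :: "nat \<Rightarrow> nat \<Rightarrow> real"
  assumes obs_deriv: "\<And>u t k. aff_traj n1 A1 D u \<Longrightarrow> k < r \<Longrightarrow>
      ((\<lambda>s. \<Psi> k (u s)) has_real_derivative (\<Sum>l<r. C k l * \<Psi> l (u t))) (at t)"
    and g_repr: "\<And>i x. i < n2 \<Longrightarrow> g x i = (\<Sum>k<r. E i k * \<Psi> k x)"
begin

abbreviation n :: nat where "n \<equiv> n1 + n2"

text \<open>The lifted state is \<open>(x', x'', \<Psi>(x'), x)\<close>; the trailing copy of \<open>x\<close> stays constant
  and only serves to make the observable map injective.\<close>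
definition lift_obs :: "(nat \<Rightarrow> real) \<Rightarrow> nat \<Rightarrow> real" where
  "lift_obs x i = (if i < r then \<Psi> i (proj n1 x) else if i < r + n then x (i - r) else 0)"

definition lift_mat :: "nat \<Rightarrow> nat \<Rightarrow> real" where
  "lift_mat i j = block 0 0 n1 n1 A1 i j + block n1 n1 n2 n2 A2 i j
     + block n1 n n2 r E i j + block n n r r C i j"

definition lift_vec :: "nat \<Rightarrow> real" where
  "lift_vec i = (if i < n1 then D i else 0)"

abbreviation lift_field :: "(nat \<Rightarrow> real) \<Rightarrow> nat \<Rightarrow> real" where
  "lift_field \<equiv> aff (n + (r + n)) lift_mat lift_vec"

lemma lift_field_apply:
  "lift_field z i =
     (if i < n1 then (\<Sum>j<n1. A1 i j * z j) + D i
      else if i < n then (\<Sum>j<n2. A2 (i - n1) j * z (n1 + j)) + (\<Sum>k<r. E (i - n1) k * z (n + k))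
      else if i < n + r then (\<Sum>l<r. C (i - n) l * z (n + l))
      else 0)"
  by (simp add: aff_apply lift_mat_def lift_vec_def distrib_right sum.distrib sum_block_mult)

lemma lift_solution_traj:
  assumes "solves (n + (r + n)) lift_field z"
  shows "aff_traj n1 A1 D (\<lambda>s. proj n1 (z s))"
  unfolding aff_traj_def
proof (intro allI impI)
  fix i t assume "i < n1"
  then have "((\<lambda>s. z s i) has_real_derivative lift_field (z t) i) (at t)"
    using assms by (simp add: solves_def)
  with \<open>i < n1\<close> show "((\<lambda>s. proj n1 (z s) i) has_real_derivative
      (\<Sum>j<n1. A1 i j * proj n1 (z t) j) + D i) (at t)"
    by (simp add: lift_field_apply proj_def)
qed

lemma lift_solution_obs:
  assumes z: "solves (n + (r + n)) lift_field z" and z0: "z 0 = concat n x0 (lift_obs x0)"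
    and "k < r"
  shows "z t (n + k) = \<Psi> k (proj n1 (z t))"
proof (rule linear_ode_unique[where I = "{..<r}" and u = "\<lambda>s k. z s (n + k)"
      and v = "\<lambda>s k. \<Psi> k (proj n1 (z s))" and B = C and b = "\<lambda>_ _. 0"])
  show "((\<lambda>s. z s (n + k)) has_real_derivative (\<Sum>l\<in>{..<r}. C k l * z t (n + l)) + 0) (at t)"
    if "k \<in> {..<r}" for k t
  proof -
    have "((\<lambda>s. z s (n + k)) has_real_derivative lift_field (z t) (n + k)) (at t)"
      using z that by (simp add: solves_def)
    with that show ?thesis by (simp add: lift_field_apply)
  qed
  show "((\<lambda>s. \<Psi> k (proj n1 (z s))) has_real_derivative
      (\<Sum>l\<in>{..<r}. C k l * \<Psi> l (proj n1 (z t))) + 0) (at t)" if "k \<in> {..<r}" for k t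
    using obs_deriv[OF lift_solution_traj[OF z]] that by simp
  have "proj n1 (z 0) = proj n1 x0"
    by (simp add: z0 proj_def concat_def fun_eq_iff)
  then show "z 0 (n + k) = \<Psi> k (proj n1 (z 0))" if "k \<in> {..<r}" for k
    using that by (simp add: z0 concat_def lift_obs_def)
qed (use \<open>k < r\<close> in auto)

lemma lift_solution_projects:
  assumes z: "solves (n + (r + n)) lift_field z" and z0: "z 0 = concat n x0 (lift_obs x0)"
  shows "solves n (tri_field n1 n2 A1 D A2 g) (\<lambda>t. proj n (z t))"
  unfolding solves_def
proof (intro conjI allI impI)
  show "proj n (z t) \<in> vec n" for t
    by (simp add: proj_def vec_def)
  fix t i assume "i < n"
  then have deriv: "((\<lambda>s. z s i) has_real_derivative lift_field (z t) i) (at t)"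
    using z by (simp add: solves_def)
  have "proj n1 (proj n (z t)) = proj n1 (z t)"
    by (simp add: proj_def fun_eq_iff)
  moreover have "g (proj n1 (z t)) (i - n1) = (\<Sum>k<r. E (i - n1) k * z t (n + k))"
    if "n1 \<le> i" using g_repr \<open>i < n\<close> that lift_solution_obs[OF z z0] by simp
  ultimately have "lift_field (z t) i = tri_field n1 n2 A1 D A2 g (proj n (z t)) i"
    using \<open>i < n\<close> by (simp add: lift_field_apply tri_field_def proj_def)
  with deriv \<open>i < n\<close> show "((\<lambda>s. proj n (z s) i) has_real_derivative
      tri_field n1 n2 A1 D A2 g (proj n (z t)) i) (at t)"
    by (simp add: proj_def)
qed

lemma lift_obs_inj: "inj_on lift_obs (vec n)"
proof (rule inj_onI, rule ext)
  fix x y i assume xy: "x \<in> vec n" "y \<in> vec n" "lift_obs x = lift_obs y"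
  show "x i = y i"
  proof (cases "i < n")
    case True
    then have "lift_obs x (r + i) = x i" "lift_obs y (r + i) = y i"
      by (simp_all add: lift_obs_def)
    then show ?thesis using xy(3) by simp
  qed (use xy in \<open>simp add: vec_def\<close>)
qed

theorem super_linearizable_tri_field: "super_linearizable n (tri_field n1 n2 A1 D A2 g)"
proof (rule super_linearizable_by_lift[OF tri_field_solution_unique _ lift_obs_inj])
  show "lift_obs x \<in> vec (r + n)" for x
    by (simp add: lift_obs_def vec_def)
  show "solves n (tri_field n1 n2 A1 D A2 g) (\<lambda>t. proj n (z t))"
    if "solves (n + (r + n)) lift_field z" "z 0 = concat n x0 (lift_obs x0)" for x0 z
    using that by (rule lift_solution_projects)
qed

end

theorem proposition1:
  fixes n1 n2 :: nat
    and A1 A2 :: "nat \<Rightarrow> nat \<Rightarrow> real"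
    and D :: "nat \<Rightarrow> real"
    and g :: "(nat \<Rightarrow> real) \<Rightarrow> (nat \<Rightarrow> real)"
  assumes "\<forall>i<n2. (\<lambda>x. g x i) \<in> poly_fun n1"
  shows "super_linearizable (n1 + n2) (tri_field n1 n2 A1 D A2 g)"
proof -
  have "\<exists>\<F>. closed_along (aff_traj n1 A1 D) \<F> \<and> (\<forall>i<n2. lincomb_of \<F> (\<lambda>x. g x i))"
    using assms by (intro poly_map_closed_along) simp
  then obtain \<F> where \<F>: "closed_along (aff_traj n1 A1 D) \<F>" "\<forall>i<n2. lincomb_of \<F> (\<lambda>x. g x i)"
    by blast
  obtain r \<Psi> C E where "tri_lifting n1 n2 A1 D g r \<Psi> C E"
  proof (rule closed_along_enumerate[OF \<F>(1) \<F>(2)[rule_format]])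
    fix m :: nat and \<Psi> C E
    assume "\<And>u t k. aff_traj n1 A1 D u \<Longrightarrow> k < m \<Longrightarrow>
        ((\<lambda>s. \<Psi> k (u s)) has_real_derivative (\<Sum>l<m. C k l * \<Psi> l (u t))) (at t)"
      and "\<And>i x. i < n2 \<Longrightarrow> g x i = (\<Sum>k<m. E i k * \<Psi> k x)"
    then have "tri_lifting n1 n2 A1 D g m \<Psi> C E"
      by unfold_locales
    then show thesis
      by (rule that)
  qed
  then show ?thesis
    by (rule tri_lifting.super_linearizable_tri_field)
qed

end
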